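(* Let $P$ be a pair of pants with $\pi_1(P)=\langle \mathcal A,\mathcal B,\mathcal C\mid \mathcal C\mathcal B\mathcal A=1\rangle$ (generators corresponding to the boundary components). Then $\mathrm{rep}(\pi_1(P),\mathrm{SO}(3))$ contains a dense open subset consisting of triangular characters. Moreover, from any character one can find a path to triangular characters such that every point of the path except its starting point is triangular.
   Context: $\mathrm{rep}(\pi_1(P),\mathrm{SO}(3))=\mathrm{Hom}(\pi_1(P),\mathrm{SO}(3))/\mathrm{SO}(3)$ (conjugation quotient). For $x\in\mathbb S^2$ and $\theta$, $R_{x,\theta}\in\mathrm{SO}(3)$ denotes the rotation fixing $x$ by angle $\theta$ counterclockwise as seen from $x$. A representation $h:\pi_1(P)\to\mathrm{SO}(3)$ is triangular if there is a nondegenerate spherical triangle (bounded by three geodesic arcs of length $<\pi$, vertices not on a common great circle) with vertices $w_0,w_1,w_2$ in clockwise order and angles $\theta_0,\theta_1,\theta_2$ such that $h(\mathcal A)=R_{w_0,2\theta_0}$, $h(\mathcal B)=R_{w_1,2\theta_1}$, $h(\mathcal C)=R_{w_2,2\theta_2}$ (equivalently, $h$ is the holonomy of the spherical structure on $P$ obtained by gluing two copies of the triangle along corresponding edges). A character is triangular if it is the class of a triangular representation. *)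

theory Defs
  imports "HOL-Analysis.Analysis"
begin

definition quotient_topology :: "'a topology \<Rightarrow> ('a \<Rightarrow> 'b) \<Rightarrow> 'b topology" where
  "quotient_topology X q =
     topology (\<lambda>U. U \<subseteq> q ` topspace X \<and> openin X {x \<in> topspace X. q x \<in> U})"

lemma istopology_quotient_topology:
  "istopology (\<lambda>U. U \<subseteq> q ` topspace X \<and> openin X {x \<in> topspace X. q x \<in> U})"
proof -
  have i: "{x \<in> topspace X. q x \<in> S \<inter> T} = {x \<in> topspace X. q x \<in> S} \<inter> {x \<in> topspace X. q x \<in> T}"
    for S T by blast
  have u: "{x \<in> topspace X. q x \<in> \<Union>K} = (\<Union>S\<in>K. {x \<in> topspace X. q x \<in> S})" for K by blast
  show ?thesis unfolding istopology_def
  proof (rule conjI; intro allI impI)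
    fix S T assume "S \<subseteq> q ` topspace X \<and> openin X {x \<in> topspace X. q x \<in> S}"
      "T \<subseteq> q ` topspace X \<and> openin X {x \<in> topspace X. q x \<in> T}"
    then show "S \<inter> T \<subseteq> q ` topspace X \<and> openin X {x \<in> topspace X. q x \<in> S \<inter> T}"
      by (metis (no_types, lifting) i le_infI1 openin_Int)
  next
    fix K assume "\<forall>S\<in>K. S \<subseteq> q ` topspace X \<and> openin X {x \<in> topspace X. q x \<in> S}"
    then show "\<Union>K \<subseteq> q ` topspace X \<and> openin X {x \<in> topspace X. q x \<in> \<Union>K}"
      by (auto simp only: u intro!: openin_Union)
  qed
qed

lemma openin_quotient_topology:
  "openin (quotient_topology X q) U \<longleftrightarrow>
     U \<subseteq> q ` topspace X \<and> openin X {x \<in> topspace X. q x \<in> U}"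
  unfolding quotient_topology_def
  by (simp only: topology_inverse'[OF istopology_quotient_topology])

type_synonym mat3 = "real^3^3"

definition SO3 :: "mat3 set" where
  "SO3 = {M. orthogonal_matrix M \<and> det M = 1}"

text \<open>R x theta: rotation fixing the unit vector x by angle theta, counterclockwise
  as seen from x (right-hand rule; Rodrigues' formula).\<close>
definition rot :: "real^3 \<Rightarrow> real \<Rightarrow> mat3" where
  "rot x \<theta> = matrix (\<lambda>v. cos \<theta> *\<^sub>R v + sin \<theta> *\<^sub>R (cross3 x v) + ((1 - cos \<theta>) * (x \<bullet> v)) *\<^sub>R x)"

text \<open>Interior angle at vertex a of the spherical triangle with vertices a, b, c:
  the angle between the tangent vectors at a of the geodesic arcs from a to b and from a to c.\<close>
definition sph_angle :: "real^3 \<Rightarrow> real^3 \<Rightarrow> real^3 \<Rightarrow> real" where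
  "sph_angle a b c =
     (let t1 = b - (a \<bullet> b) *\<^sub>R a; t2 = c - (a \<bullet> c) *\<^sub>R a
      in arccos ((t1 \<bullet> t2) / (norm t1 * norm t2)))"

text \<open>Nondegenerate spherical triangle: vertices on the unit sphere, not on a common
  great circle (i.e. linearly independent; then the sides are geodesic arcs of length
  less than pi).  Vertices in clockwise order as seen from outside the sphere means
  negative orientation: w0 . (w1 x w2) < 0.\<close>
definition cw_sph_triangle :: "real^3 \<Rightarrow> real^3 \<Rightarrow> real^3 \<Rightarrow> bool" where
  "cw_sph_triangle w0 w1 w2 \<longleftrightarrow>
     norm w0 = 1 \<and> norm w1 = 1 \<and> norm w2 = 1 \<and>
     w0 \<bullet> cross3 w1 w2 \<noteq> 0 \<and>
     w0 \<bullet> cross3 w1 w2 < 0"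

text \<open>pi_1(P) = < A, B, C | C B A = 1 >.  A homomorphism pi_1(P) \<rightarrow> SO(3) is the triple
  (h(A), h(B), h(C)) of elements of SO(3) satisfying h(C) h(B) h(A) = 1.\<close>
definition Hom_P :: "(mat3 \<times> mat3 \<times> mat3) set" where
  "Hom_P = {(a, b, c). a \<in> SO3 \<and> b \<in> SO3 \<and> c \<in> SO3 \<and> c ** b ** a = mat 1}"

definition conj_rep :: "mat3 \<Rightarrow> mat3 \<times> mat3 \<times> mat3 \<Rightarrow> mat3 \<times> mat3 \<times> mat3" where
  "conj_rep g h = (case h of (a, b, c) \<Rightarrow>
     (g ** a ** matrix_inv g, g ** b ** matrix_inv g, g ** c ** matrix_inv g))"

definition character :: "mat3 \<times> mat3 \<times> mat3 \<Rightarrow> (mat3 \<times> mat3 \<times> mat3) set" where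
  "character h = {conj_rep g h | g. g \<in> SO3}"

definition Hom_top :: "(mat3 \<times> mat3 \<times> mat3) topology" where
  "Hom_top = subtopology euclidean Hom_P"

definition rep_top :: "(mat3 \<times> mat3 \<times> mat3) set topology" where
  "rep_top = quotient_topology Hom_top character"

definition triangular_rep :: "mat3 \<times> mat3 \<times> mat3 \<Rightarrow> bool" where
  "triangular_rep h \<longleftrightarrow> h \<in> Hom_P \<and>
     (\<exists>w0 w1 w2. cw_sph_triangle w0 w1 w2 \<and>
        h = (rot w0 (2 * sph_angle w0 w1 w2),
             rot w1 (2 * sph_angle w1 w2 w0),
             rot w2 (2 * sph_angle w2 w0 w1)))"

definition triangular_char :: "(mat3 \<times> mat3 \<times> mat3) set \<Rightarrow> bool" where
  "triangular_char c \<longleftrightarrow> (\<exists>h. triangular_rep h \<and> c = character h)"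

end

theory Submission
  imports Defs
begin

text \<open>A representation (a, b, c) with a b \<noteq> b a is triangular: a and b factor as a = \<sigma>_p \<sigma>_q and
  b = \<sigma>_r \<sigma>_p through reflections in three planes in general position, so c = \<sigma>_q \<sigma>_r, and the
  triangle cut out by the three planes has exactly these products as vertex rotations.
  Noncommutativity is an open, conjugation-invariant condition, and every pair of rotations can
  be deformed so that it stops commuting at once; hence the characters of noncommuting
  representations form an open set of triangular characters which every character reaches by a
  path, so it is also dense.\<close>

lemma inner_vec3: "x \<bullet> (y::real^3) = x$1 * y$1 + x$2 * y$2 + x$3 * y$3"
  by (simp add: inner_vec_def sum_3)

lemma inner_cross_cyclic: "(x::real^3) \<bullet> cross3 y z = y \<bullet> cross3 z x"
  by (simp add: inner_vec3 cross_components algebra_simps)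

lemma cross_cross_left: "cross3 (cross3 a b) c = (a \<bullet> c) *\<^sub>R b - (b \<bullet> c) *\<^sub>R a"
  by (simp add: vec_eq_iff forall_3 cross_components inner_vec3 algebra_simps)

lemma cross_cross_right: "cross3 a (cross3 b c) = (a \<bullet> c) *\<^sub>R b - (a \<bullet> b) *\<^sub>R c"
  by (simp add: vec_eq_iff forall_3 cross_components inner_vec3 algebra_simps)

lemma cross_eq_0_unit_vectors:
  assumes u: "norm u = 1" and v: "norm v = 1" and uv: "cross3 u v = 0"
  shows "v = u \<or> v = - u"
proof -
  have "0 = (u \<bullet> v) *\<^sub>R u - v"
    using cross_cross_right[of u u v] uv u by (simp add: norm_eq_1)
  then have e: "v = (u \<bullet> v) *\<^sub>R u" by simp
  then have "norm v = \<bar>u \<bullet> v\<bar> * norm u" by (metis norm_scaleR)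
  then have "\<bar>u \<bullet> v\<bar> = 1" using u v by simp
  then have "u \<bullet> v = 1 \<or> u \<bullet> v = -1" by linarith
  then show ?thesis using e by (metis scaleR_minus1_left scaleR_one)
qed

definition reflection :: "real^3 \<Rightarrow> real^3 \<Rightarrow> real^3" where
  "reflection n v = v - (2 * (n \<bullet> v) / (n \<bullet> n)) *\<^sub>R n"

definition reflection_matrix :: "real^3 \<Rightarrow> mat3" where
  "reflection_matrix n = matrix (reflection n)"

lemma linear_reflection: "linear (reflection n)"
  unfolding reflection_def
  by (auto simp: linear_iff inner_add_right algebra_simps add_divide_distrib)

lemma reflection_matrix_apply: "reflection_matrix n *v v = reflection n v"
  using matrix_vector_mul(2)[OF linear_reflection] unfolding reflection_matrix_def by metis

lemma reflection_scaleR: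
  assumes k: "k \<noteq> 0" shows "reflection (k *\<^sub>R n) = reflection n"
proof (rule ext)
  fix v
  have "(2 * ((k *\<^sub>R n) \<bullet> v) / ((k *\<^sub>R n) \<bullet> (k *\<^sub>R n))) * k = 2 * (n \<bullet> v) / (n \<bullet> n)"
    using k by (cases "n = 0") (simp_all add: divide_simps)
  then show "reflection (k *\<^sub>R n) v = reflection n v" unfolding reflection_def by (metis scaleR_scaleR)
qed

lemma reflection_matrix_scaleR: "k \<noteq> 0 \<Longrightarrow> reflection_matrix (k *\<^sub>R n) = reflection_matrix n"
  unfolding reflection_matrix_def by (simp add: reflection_scaleR)

lemma reflection_reflection:
  assumes "n \<noteq> 0" shows "reflection n (reflection n v) = v"
proof -
  define a where "a = 2 * (n \<bullet> v) / (n \<bullet> n)"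
  have "2 * (n \<bullet> (v - a *\<^sub>R n)) / (n \<bullet> n) = - a"
    using assms unfolding a_def by (simp add: inner_diff_right)
  then show ?thesis unfolding reflection_def a_def[symmetric] by simp
qed

lemma reflection_matrix_square: "n \<noteq> 0 \<Longrightarrow> reflection_matrix n ** reflection_matrix n = mat 1"
  by (simp add: matrix_eq matrix_vector_mul_assoc[symmetric] reflection_matrix_apply reflection_reflection)

lemma scaled_reflection_reflection:
  assumes "m \<noteq> 0" "n \<noteq> 0"
  shows "((m \<bullet> m) * (n \<bullet> n)) *\<^sub>R reflection m (reflection n v) =
    ((m \<bullet> m) * (n \<bullet> n)) *\<^sub>R v - (2 * (n \<bullet> v) * (m \<bullet> m)) *\<^sub>R n
      - (2 * (m \<bullet> v) * (n \<bullet> n)) *\<^sub>R m + (4 * (n \<bullet> v) * (m \<bullet> n)) *\<^sub>R m"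
proof -
  have m: "m \<bullet> m \<noteq> 0" and n: "n \<bullet> n \<noteq> 0" using assms by auto
  define r where "r = reflection n v"
  have r: "r = v - (2 * (n \<bullet> v) / (n \<bullet> n)) *\<^sub>R n" unfolding r_def reflection_def ..
  have mr: "m \<bullet> r = m \<bullet> v - 2 * (n \<bullet> v) / (n \<bullet> n) * (m \<bullet> n)"
    unfolding r by (simp add: inner_diff_right)
  have e1: "((m \<bullet> m) * (n \<bullet> n)) * (2 * (m \<bullet> r) / (m \<bullet> m))
      = 2 * (m \<bullet> v) * (n \<bullet> n) - 4 * (n \<bullet> v) * (m \<bullet> n)"
    unfolding mr using m n by (simp add: field_simps)
  have e2: "((m \<bullet> m) * (n \<bullet> n)) *\<^sub>R r = ((m \<bullet> m) * (n \<bullet> n)) *\<^sub>R v - (2 * (n \<bullet> v) * (m \<bullet> m)) *\<^sub>R n"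
    unfolding r using n by (simp add: scaleR_diff_right)
  have "((m \<bullet> m) * (n \<bullet> n)) *\<^sub>R reflection m r
      = ((m \<bullet> m) * (n \<bullet> n)) *\<^sub>R r - (((m \<bullet> m) * (n \<bullet> n)) * (2 * (m \<bullet> r) / (m \<bullet> m))) *\<^sub>R m"
    unfolding reflection_def by (simp add: scaleR_diff_right)
  also have "\<dots> = ((m \<bullet> m) * (n \<bullet> n)) *\<^sub>R v - (2 * (n \<bullet> v) * (m \<bullet> m)) *\<^sub>R n
      - (2 * (m \<bullet> v) * (n \<bullet> n)) *\<^sub>R m + (4 * (n \<bullet> v) * (m \<bullet> n)) *\<^sub>R m"
    unfolding e1 e2 by (simp add: algebra_simps)
  finally show ?thesis unfolding r_def .
qed

definition rot_fun :: "real^3 \<Rightarrow> real \<Rightarrow> real^3 \<Rightarrow> real^3" where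
  "rot_fun x \<theta> v = cos \<theta> *\<^sub>R v + sin \<theta> *\<^sub>R (cross3 x v) + ((1 - cos \<theta>) * (x \<bullet> v)) *\<^sub>R x"

lemma linear_rot_fun: "linear (rot_fun x \<theta>)"
  unfolding rot_fun_def
  by (auto simp: linear_iff cross_add_right cross_mult_right inner_add_right algebra_simps)

lemma rot_eq_matrix: "rot x \<theta> = matrix (rot_fun x \<theta>)"
  unfolding rot_def rot_fun_def ..

lemma rot_apply: "rot x \<theta> *v v = rot_fun x \<theta> v"
  unfolding rot_eq_matrix using matrix_vector_mul(2)[OF linear_rot_fun] by metis

lemma rot_fun_components:
  "rot_fun w \<theta> v $ 1 = cos \<theta> * v$1 + sin \<theta> * (w$2 * v$3 - v$2 * w$3)
     + (1 - cos \<theta>) * (w$1 * v$1 + w$2 * v$2 + w$3 * v$3) * w$1"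
  "rot_fun w \<theta> v $ 2 = cos \<theta> * v$2 + sin \<theta> * (w$3 * v$1 - v$3 * w$1)
     + (1 - cos \<theta>) * (w$1 * v$1 + w$2 * v$2 + w$3 * v$3) * w$2"
  "rot_fun w \<theta> v $ 3 = cos \<theta> * v$3 + sin \<theta> * (w$1 * v$2 - v$1 * w$2)
     + (1 - cos \<theta>) * (w$1 * v$1 + w$2 * v$2 + w$3 * v$3) * w$3"
  unfolding rot_fun_def by (simp_all add: cross_components inner_vec3)

lemma rot_entry: "rot w \<theta> $ i $ j = rot_fun w \<theta> (axis j 1) $ i"
  unfolding rot_eq_matrix matrix_def by simp

lemma rot_fixes_axis: "norm w = 1 \<Longrightarrow> rot w \<theta> *v w = w"
  by (simp add: rot_apply rot_fun_def norm_eq_1 algebra_simps)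

lemma rot_zero: "rot w 0 = mat 1"
  by (simp add: matrix_eq rot_apply rot_fun_def)

lemma rot_minus_axis: "rot (- w) \<theta> = rot w (- \<theta>)"
  by (simp add: matrix_eq rot_apply rot_fun_def)

lemma rot_cong: "cos \<theta> = cos \<theta>' \<Longrightarrow> sin \<theta> = sin \<theta>' \<Longrightarrow> rot w \<theta> = rot w \<theta>'"
  by (simp add: rot_def)

lemma norm_rot_fun:
  assumes "norm w = 1" shows "norm (rot_fun w \<theta> v) = norm v"
proof -
  have w: "w$1 * w$1 + w$2 * w$2 + w$3 * w$3 = 1" using assms by (simp add: norm_eq_1 inner_vec3)
  have cs: "cos \<theta> * cos \<theta> + sin \<theta> * sin \<theta> = 1" by (simp add: power2_eq_square[symmetric])
  have "rot_fun w \<theta> v \<bullet> rot_fun w \<theta> v = v \<bullet> v"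
    unfolding inner_vec3 rot_fun_components using w cs by algebra
  then show ?thesis by (simp add: norm_eq_sqrt_inner)
qed

lemma det_rot:
  assumes "norm w = 1" shows "det (rot w \<theta>) = 1"
proof -
  have w: "w$1 * w$1 + w$2 * w$2 + w$3 * w$3 = 1" using assms by (simp add: norm_eq_1 inner_vec3)
  have cs: "cos \<theta> * cos \<theta> + sin \<theta> * sin \<theta> = 1" by (simp add: power2_eq_square[symmetric])
  show ?thesis
    unfolding det_3 rot_entry rot_fun_components by (simp add: axis_def) (use w cs in algebra)
qed

lemma rot_in_SO3:
  assumes "norm w = 1" shows "rot w \<theta> \<in> SO3"
proof -
  have "orthogonal_transformation (rot_fun w \<theta>)"
    unfolding orthogonal_transformation using linear_rot_fun norm_rot_fun[OF assms] by blast
  then have "orthogonal_matrix (rot w \<theta>)"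
    unfolding rot_eq_matrix using orthogonal_transformation_matrix by blast
  then show ?thesis unfolding SO3_def using det_rot[OF assms] by simp
qed

lemma rot_fixed_vector_parallel:
  assumes "rot w \<theta> *v x = x" "cos \<theta> \<noteq> 1" "norm w = 1"
  shows "cross3 w x = 0"
proof -
  have "(rot_fun w \<theta> x - x) \<bullet> x = (1 - cos \<theta>) * ((w \<bullet> x)^2 - x \<bullet> x)"
    unfolding rot_fun_def
    by (simp add: inner_add_left inner_diff_left dot_cross_self algebra_simps power2_eq_square)
  then have "(w \<bullet> x)^2 = x \<bullet> x" using assms(1,2) by (simp add: rot_apply)
  then have "(norm (cross3 w x))^2 = 0" using norm_cross[of w x] assms(3) by (simp add: dot_square_norm)
  then show ?thesis by simp
qed

lemma rot_fun_rot_fun: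
  assumes "norm w = 1"
  shows "rot_fun w \<alpha> (rot_fun w \<beta> v) = rot_fun w (\<alpha> + \<beta>) v"
proof -
  have w: "w \<bullet> w = 1" using assms by (simp add: norm_eq_1)
  have cross: "rot_fun w \<alpha> (cross3 w v) = cos \<alpha> *\<^sub>R cross3 w v + sin \<alpha> *\<^sub>R ((w \<bullet> v) *\<^sub>R w - v)"
    unfolding rot_fun_def using w by (simp add: cross_cross_right dot_cross_self)
  have axis: "rot_fun w \<alpha> w = w" unfolding rot_fun_def using w by (simp add: algebra_simps)
  have "rot_fun w \<alpha> (rot_fun w \<beta> v) = cos \<beta> *\<^sub>R rot_fun w \<alpha> v + sin \<beta> *\<^sub>R rot_fun w \<alpha> (cross3 w v)
      + ((1 - cos \<beta>) * (w \<bullet> v)) *\<^sub>R rot_fun w \<alpha> w"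
    unfolding rot_fun_def[of w \<beta>] linear_add[OF linear_rot_fun] linear_scale[OF linear_rot_fun] ..
  also have "\<dots> = rot_fun w (\<alpha> + \<beta>) v"
    unfolding cross axis by (simp add: rot_fun_def cos_add sin_add algebra_simps)
  finally show ?thesis .
qed

lemma rot_commute:
  assumes "norm w = 1" shows "rot w \<alpha> ** rot w \<beta> = rot w \<beta> ** rot w \<alpha>"
  by (simp add: matrix_eq matrix_vector_mul_assoc[symmetric] rot_apply rot_fun_rot_fun[OF assms] add.commute)

lemma rot_noncommute:
  assumes w: "norm w = 1" and v: "norm v = 1" and wv: "cross3 w v \<noteq> 0"
    and c: "cos \<phi> \<noteq> 1" and s: "sin \<psi> \<noteq> 0"
  shows "rot w \<phi> ** rot v \<psi> \<noteq> rot v \<psi> ** rot w \<phi>"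
proof
  assume E: "rot w \<phi> ** rot v \<psi> = rot v \<psi> ** rot w \<phi>"
  define y where "y = rot v \<psi> *v w"
  have "rot w \<phi> *v y = rot v \<psi> *v (rot w \<phi> *v w)"
    unfolding y_def by (metis E matrix_vector_mul_assoc)
  then have "rot w \<phi> *v y = y" unfolding y_def using rot_fixes_axis[OF w] by simp
  then have "cross3 w y = 0" using rot_fixed_vector_parallel c w by blast
  moreover have "cross3 w (rot_fun v \<psi> w) \<bullet> v = sin \<psi> * (cross3 v w \<bullet> cross3 v w)"
    unfolding inner_vec3 cross_components rot_fun_components by algebra
  ultimately have "sin \<psi> * (cross3 v w \<bullet> cross3 v w) = 0" unfolding y_def rot_apply by simp
  moreover have "cross3 v w \<noteq> 0" using wv by (metis cross_skew neg_equal_0_iff_equal)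
  ultimately show False using s by simp
qed

lemma continuous_on_rot:
  fixes x :: "'a::t2_space \<Rightarrow> real^3" and \<theta> :: "'a \<Rightarrow> real"
  assumes "continuous_on S x" "continuous_on S \<theta>"
  shows "continuous_on S (\<lambda>s. rot (x s) (\<theta> s))"
proof -
  have e: "rot (x s) (\<theta> s) = (\<chi> i j. (cos (\<theta> s) *\<^sub>R axis j 1 + sin (\<theta> s) *\<^sub>R cross3 (x s) (axis j 1)
      + ((1 - cos (\<theta> s)) * (x s \<bullet> axis j 1)) *\<^sub>R x s) $ i)" for s
    by (simp add: vec_eq_iff rot_entry rot_fun_def)
  show ?thesis
    unfolding e by (intro continuous_intros continuous_on_cross continuous_on_const assms)
qed

text \<open>The hypotheses say that \<phi> is twice the angle from n to m about w: reflections in two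
  planes through w compose to the rotation about w by twice their angle.\<close>
lemma reflection_matrix_mult_eq_rot:
  fixes m n w :: "real^3"
  assumes mw: "m \<bullet> w = 0" and nw: "n \<bullet> w = 0" and w: "w \<bullet> w = 1" and "m \<noteq> 0" "n \<noteq> 0"
    and c: "cos \<phi> * ((m \<bullet> m) * (n \<bullet> n)) = (m \<bullet> n)^2 - (cross3 m n \<bullet> w)^2"
    and s: "sin \<phi> * ((m \<bullet> m) * (n \<bullet> n)) = -2 * (m \<bullet> n) * (cross3 m n \<bullet> w)"
  shows "reflection_matrix m ** reflection_matrix n = rot w \<phi>"
proof -
  let ?P = "(m \<bullet> m) * (n \<bullet> n)"
  have P: "?P \<noteq> 0" using \<open>m \<noteq> 0\<close> \<open>n \<noteq> 0\<close> by simp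
  have c': "(1 - cos \<phi>) * ?P = ?P - (m \<bullet> n)^2 + (cross3 m n \<bullet> w)^2"
    using c by (simp add: algebra_simps)
  show ?thesis
  proof (subst matrix_eq, intro allI)
    fix v
    have poly: "?P *\<^sub>R v - (2 * (n \<bullet> v) * (m \<bullet> m)) *\<^sub>R n - (2 * (m \<bullet> v) * (n \<bullet> n)) *\<^sub>R m
        + (4 * (n \<bullet> v) * (m \<bullet> n)) *\<^sub>R m
      = ((m \<bullet> n)^2 - (cross3 m n \<bullet> w)^2) *\<^sub>R v
        + (-2 * (m \<bullet> n) * (cross3 m n \<bullet> w)) *\<^sub>R cross3 w v
        + ((?P - (m \<bullet> n)^2 + (cross3 m n \<bullet> w)^2) * (w \<bullet> v)) *\<^sub>R w"
      using mw nw w unfolding vec_eq_iff forall_3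
      by (simp only: vector_add_component vector_minus_component vector_scaleR_component
          cross_components inner_vec3 real_scaleR_def) (intro conjI; algebra)
    have "?P *\<^sub>R rot_fun w \<phi> v
      = (cos \<phi> * ?P) *\<^sub>R v + (sin \<phi> * ?P) *\<^sub>R cross3 w v + ((1 - cos \<phi>) * ?P * (w \<bullet> v)) *\<^sub>R w"
      by (simp add: rot_fun_def scaleR_add_right algebra_simps)
    also have "\<dots> = ?P *\<^sub>R reflection m (reflection n v)"
      unfolding c s c' scaled_reflection_reflection[OF \<open>m \<noteq> 0\<close> \<open>n \<noteq> 0\<close>] by (rule poly[symmetric])
    finally have "?P *\<^sub>R reflection m (reflection n v) = ?P *\<^sub>R rot_fun w \<phi> v" ..
    then show "(reflection_matrix m ** reflection_matrix n) *v v = rot w \<phi> *v v"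
      using P by (simp add: matrix_vector_mul_assoc[symmetric] reflection_matrix_apply rot_apply)
  qed
qed

lemma reflection_matrix_turned_normal:
  fixes w p :: "real^3" and \<alpha> :: real
  assumes w: "w \<bullet> w = 1" and pw: "p \<bullet> w = 0" and p: "p \<noteq> 0"
  defines "q \<equiv> cos \<alpha> *\<^sub>R p + sin \<alpha> *\<^sub>R cross3 w p"
  shows "reflection_matrix q ** reflection_matrix p = rot w (2 * \<alpha>)"
    and "reflection_matrix p ** reflection_matrix q = rot w (- (2 * \<alpha>))"
proof -
  have x1: "cross3 w p \<bullet> w = 0" "cross3 w p \<bullet> p = 0" by (simp_all add: dot_cross_self)
  have x2: "cross3 w p \<bullet> cross3 w p = p \<bullet> p"
    using dot_cross[of w p w p] w pw by (simp add: inner_commute)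
  have qw: "q \<bullet> w = 0" unfolding q_def using pw x1 by (simp add: inner_add_left)
  have pq: "p \<bullet> q = cos \<alpha> * (p \<bullet> p)" unfolding q_def using x1
    by (simp add: inner_add_right inner_commute)
  have "q \<bullet> q = cos \<alpha> * cos \<alpha> * (p \<bullet> p) + sin \<alpha> * sin \<alpha> * (p \<bullet> p)" unfolding q_def using x1 x2
    by (simp add: inner_add_right inner_add_left inner_commute algebra_simps)
  also have "\<dots> = (cos \<alpha> * cos \<alpha> + sin \<alpha> * sin \<alpha>) * (p \<bullet> p)" by (simp only: distrib_right)
  finally have qq: "q \<bullet> q = p \<bullet> p" by simp
  have "cross3 p (cross3 w p) \<bullet> w = p \<bullet> p"
    using w pw by (simp add: cross_cross_right inner_diff_left inner_commute)
  then have pqw: "cross3 p q \<bullet> w = sin \<alpha> * (p \<bullet> p)" unfolding q_def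
    by (simp add: cross_add_right cross_mult_right inner_add_left)
  have qpw: "cross3 q p \<bullet> w = - sin \<alpha> * (p \<bullet> p)"
    using pqw by (metis cross_skew inner_minus_left mult_minus_left)
  have q: "q \<noteq> 0" using qq p by auto
  show "reflection_matrix q ** reflection_matrix p = rot w (2 * \<alpha>)"
    by (rule reflection_matrix_mult_eq_rot[OF qw pw w q p]; unfold cos_double sin_double)
      (simp_all add: inner_commute[of q p] pq qq qpw power2_eq_square algebra_simps)
  show "reflection_matrix p ** reflection_matrix q = rot w (- (2 * \<alpha>))"
    by (rule reflection_matrix_mult_eq_rot[OF pw qw w p q]; unfold cos_minus sin_minus cos_double sin_double)
      (simp_all add: pq qq pqw power2_eq_square algebra_simps)
qed

section \<open>Euler's rotation theorem\<close>

lemma SO3_D: "M \<in> SO3 \<Longrightarrow> transpose M ** M = mat 1 \<and> M ** transpose M = mat 1 \<and> det M = 1"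
  unfolding SO3_def orthogonal_matrix_def by auto

lemma SO3_mult: "a \<in> SO3 \<Longrightarrow> b \<in> SO3 \<Longrightarrow> a ** b \<in> SO3"
  unfolding SO3_def by (simp add: orthogonal_matrix_mul det_mul)

lemma SO3_transpose: "a \<in> SO3 \<Longrightarrow> transpose a \<in> SO3"
  unfolding SO3_def by simp

lemma mat_1_in_SO3: "mat 1 \<in> SO3"
  unfolding SO3_def by (simp add: orthogonal_matrix_id)

text \<open>det (M - 1) = det (M (1 - M^T)) = det (1 - M)^T = - det (M - 1), as the dimension is odd.\<close>
lemma SO3_fixes_unit_vector:
  assumes M: "M \<in> SO3" obtains w where "norm w = 1" "M *v w = w"
proof -
  have MMt: "M ** transpose M = mat 1" and d: "det M = 1" using SO3_D[OF M] by auto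
  have "M *v (transpose M *v x) = x" for x
    by (metis matrix_vector_mul_assoc matrix_vector_mul_lid MMt)
  then have "M - mat 1 = M ** (mat 1 - transpose M)"
    by (simp add: matrix_eq matrix_vector_mult_diff_rdistrib matrix_vector_mult_diff_distrib
        flip: matrix_vector_mul_assoc)
  moreover have "transpose (mat 1 - M) = mat 1 - transpose M"
    by (simp add: vec_eq_iff transpose_def mat_def)
  ultimately have "det (M - mat 1) = det (transpose (mat 1 - M))"
    by (simp add: det_mul d)
  also have "\<dots> = - det (M - mat 1)"
    unfolding det_transpose by (simp add: det_3 mat_def algebra_simps)
  finally have "det (M - mat 1) = 0" by simp
  then obtain z where z: "z \<noteq> 0" "(M - mat 1) *v z = 0"
    using det_nz_iff_inj[of "(*v) (M - mat 1)"] linear_injective_0[OF matrix_vector_mul_linear]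
    by (auto simp: inj_on_def)
  show thesis
  proof
    show "norm (sgn z) = 1" using z(1) by (simp add: norm_sgn)
    show "M *v sgn z = sgn z"
      using z(2) by (simp add: sgn_div_norm matrix_vector_mult_scaleR matrix_vector_mult_diff_rdistrib)
  qed
qed

lemma rot_conjugate:
  assumes A: "rotation_matrix A"
  shows "A ** rot x t ** transpose A = rot (A *v x) t"
proof (subst matrix_eq, intro allI)
  fix v
  have AAt: "A ** transpose A = mat 1" using A unfolding rotation_matrix_def orthogonal_matrix_def by auto
  define u where "u = transpose A *v v"
  have Au: "A *v u = v" unfolding u_def by (metis matrix_vector_mul_assoc matrix_vector_mul_lid AAt)
  have xu: "x \<bullet> u = (A *v x) \<bullet> v"
    unfolding u_def using dot_lmul_matrix[of x "transpose A" v] by simp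
  have cr: "A *v cross3 x u = cross3 (A *v x) v"
    using cross_rotation_matrix[OF A, of x u] Au by simp
  have "(A ** rot x t ** transpose A) *v v = A *v (rot_fun x t u)"
    unfolding u_def by (simp only: matrix_vector_mul_assoc[symmetric] rot_apply)
  also have "\<dots> = rot_fun (A *v x) t v"
    unfolding rot_fun_def by (simp add: matrix_vector_right_distrib matrix_vector_mult_scaleR Au xu cr)
  finally show "(A ** rot x t ** transpose A) *v v = rot (A *v x) t *v v" by (simp add: rot_apply)
qed

lemma SO3_fixing_axis3_eq_rot:
  assumes M: "M \<in> SO3" and f: "M *v axis 3 1 = axis 3 1"
  obtains t where "M = rot (axis 3 1) t"
proof -
  have o1: "transpose M ** M = mat 1" and o2: "M ** transpose M = mat 1" and d: "det M = 1"
    using SO3_D[OF M] by auto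
  have "M $ i $ 3 = (M *v axis 3 1) $ i" for i
    by (simp add: matrix_vector_mult_basis column_def)
  then have c3: "M$1$3 = 0" "M$2$3 = 0" "M$3$3 = 1" unfolding f by (simp_all add: axis_def)
  have "M$3$1 * M$3$1 + M$3$2 * M$3$2 + M$3$3 * M$3$3 = 1"
    using arg_cong[OF o2, of "\<lambda>X. X$3$3"] by (simp add: matrix_matrix_mult_def sum_3 transpose_def mat_def)
  then have r3: "M$3$1 = 0" "M$3$2 = 0" using c3 sum_squares_eq_zero_iff by auto
  have k11: "M$1$1 * M$1$1 + M$2$1 * M$2$1 + M$3$1 * M$3$1 = 1"
    using arg_cong[OF o1, of "\<lambda>X. X$1$1"] by (simp add: matrix_matrix_mult_def sum_3 transpose_def mat_def)
  have k12: "M$1$1 * M$1$2 + M$2$1 * M$2$2 + M$3$1 * M$3$2 = 0"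
    using arg_cong[OF o1, of "\<lambda>X. X$1$2"] by (simp add: matrix_matrix_mult_def sum_3 transpose_def mat_def)
  have dd: "M$1$1 * M$2$2 - M$1$2 * M$2$1 = 1"
    using d c3 r3 by (simp add: det_3)
  define a where "a = M$1$1"
  define b where "b = M$2$1"
  have ab: "a^2 + b^2 = 1" using k11 r3 unfolding a_def b_def by (simp add: power2_eq_square)
  have g: "M$1$2 = - b" and h: "M$2$2 = a"
    using k11 k12 dd r3 unfolding a_def b_def by algebra+
  obtain t where t: "a = cos t" "b = sin t" using sincos_total_2pi[OF ab] by blast
  have "M = rot (axis 3 1) t"
    unfolding vec_eq_iff forall_3 rot_entry rot_fun_components
    using c3 r3 g h t unfolding a_def b_def by (simp add: axis_def)
  then show thesis ..
qed

lemma SO3_eq_rot: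
  assumes M: "M \<in> SO3" obtains w t where "norm w = 1" "M = rot w t"
proof -
  obtain w where w: "norm w = 1" "M *v w = w" using SO3_fixes_unit_vector[OF M] by blast
  obtain A where A: "rotation_matrix A" "A *v axis 3 1 = w"
    using rotation_matrix_exists_basis[of w 3] w(1) by auto
  have AAt: "A ** transpose A = mat 1" and AtA: "transpose A ** A = mat 1"
    using A(1) unfolding rotation_matrix_def orthogonal_matrix_def by auto
  have "A \<in> SO3" using A(1) unfolding rotation_matrix_def SO3_def by simp
  then have "transpose A ** M ** A \<in> SO3" using M by (simp add: SO3_mult SO3_transpose)
  moreover have "(transpose A ** M ** A) *v axis 3 1 = transpose A *v (A *v axis 3 1)"
    using A(2) w(2) by (simp add: matrix_vector_mul_assoc[symmetric])
  then have "(transpose A ** M ** A) *v axis 3 1 = axis 3 1"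
    by (simp only: matrix_vector_mul_assoc AtA matrix_vector_mul_lid)
  ultimately obtain t where t: "transpose A ** M ** A = rot (axis 3 1) t"
    using SO3_fixing_axis3_eq_rot by blast
  have "M = A ** (transpose A ** M ** A) ** transpose A"
    by (simp add: matrix_mul_assoc[symmetric] AAt) (simp add: matrix_mul_assoc AAt)
  also have "\<dots> = rot w t" unfolding t rot_conjugate[OF A(1)] A(2) ..
  finally show thesis using that w(1) by blast
qed

lemma SO3_eq_rot_angle_0_pi:
  assumes M: "M \<in> SO3" obtains w t where "norm w = 1" "0 \<le> t" "t \<le> pi" "M = rot w t"
proof -
  obtain w t where w: "norm w = 1" and Mw: "M = rot w t" using SO3_eq_rot[OF M] by blast
  show thesis
  proof (cases "0 \<le> sin t")
    case True
    then obtain t' where "0 \<le> t'" "t' \<le> pi" "cos t' = cos t" "sin t' = sin t"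
      using sincos_total_pi[of "sin t" "cos t"] by auto
    then show thesis using that w Mw rot_cong[of t t' w] by metis
  next
    case False
    then obtain t' where t': "0 \<le> t'" "t' \<le> pi" "cos t' = cos (- t)" "sin t' = sin (- t)"
      using sincos_total_pi[of "sin (- t)" "cos (- t)"] by auto
    have "M = rot w (- t')" using Mw rot_cong[of t "- t'" w] t' by simp
    then have "M = rot (- w) t'" by (simp add: rot_minus_axis)
    then show thesis using that w t' by (metis norm_minus_cancel)
  qed
qed

section \<open>Triangular representations\<close>

lemma inner_cross_perp_sq:
  fixes m n w :: "real^3"
  assumes "m \<bullet> w = 0" "n \<bullet> w = 0" "w \<bullet> w = 1"
  shows "(cross3 m n \<bullet> w)^2 + (m \<bullet> n)^2 = (m \<bullet> m) * (n \<bullet> n)"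
  using assms unfolding inner_vec3 cross_components power2_eq_square by algebra

lemma rot_vertex_eq_reflections:
  assumes T: "cw_sph_triangle w0 w1 w2"
  shows "rot w0 (2 * sph_angle w0 w1 w2) = reflection_matrix (cross3 w0 w1) ** reflection_matrix (cross3 w2 w0)"
proof -
  define m where "m = cross3 w0 w1"
  define n where "n = cross3 w2 w0"
  define D where "D = w0 \<bullet> cross3 w1 w2"
  define C where "C = m \<bullet> n"
  define S where "S = cross3 m n \<bullet> w0"
  define Q where "Q = norm m * norm n"
  have u0: "w0 \<bullet> w0 = 1" and u1: "w1 \<bullet> w1 = 1" and u2: "w2 \<bullet> w2 = 1" and D0: "D < 0"
    using T unfolding cw_sph_triangle_def D_def by (auto simp: norm_eq_1)
  have mw: "m \<bullet> w0 = 0" and nw: "n \<bullet> w0 = 0" unfolding m_def n_def by (simp_all add: dot_cross_self)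
  have "m \<bullet> w2 = D" "n \<bullet> w1 = D" unfolding m_def n_def D_def by (simp_all add: inner_vec3 cross_components algebra_simps)
  then have m0: "m \<noteq> 0" and n0: "n \<noteq> 0" using D0 by auto
  have "S = - D"
    unfolding S_def m_def n_def D_def
    using u0 inner_cross_cyclic[of w0 w1 w2] inner_cross_cyclic[of w1 w2 w0]
    by (simp add: cross_cross_left dot_cross_self)
  then have S0: "S > 0" using D0 by simp
  have Q0: "Q > 0" unfolding Q_def using m0 n0 by simp
  have QP: "Q^2 = (m \<bullet> m) * (n \<bullet> n)" unfolding Q_def by (simp add: power_mult_distrib dot_square_norm)
  have CS: "S^2 + C^2 = Q^2" unfolding QP S_def C_def using inner_cross_perp_sq[OF mw nw u0] .
  define t1 where "t1 = w1 - (w0 \<bullet> w1) *\<^sub>R w0"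
  define t2 where "t2 = w2 - (w0 \<bullet> w2) *\<^sub>R w0"
  have "t1 \<bullet> t2 = - C" unfolding t1_def t2_def C_def m_def n_def dot_cross
    by (simp add: inner_diff_left inner_diff_right u0 inner_commute algebra_simps)
  moreover have "norm t1 = norm m"
    unfolding norm_eq_sqrt_inner t1_def m_def dot_cross
    by (simp add: inner_diff_left inner_diff_right u0 u1 inner_commute algebra_simps)
  moreover have "norm t2 = norm n"
    unfolding norm_eq_sqrt_inner t2_def n_def dot_cross
    by (simp add: inner_diff_left inner_diff_right u0 u2 inner_commute algebra_simps)
  ultimately have angle: "sph_angle w0 w1 w2 = arccos (- C / Q)"
    unfolding sph_angle_def Let_def Q_def t1_def t2_def by simp
  have y2: "1 - (- C / Q)^2 = (S / Q)^2" using Q0 CS by (simp add: field_simps power_divide)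
  then have "(- C / Q)^2 \<le> 1" by (smt (verit) zero_le_power2)
  then have y: "-1 \<le> - C / Q" "- C / Q \<le> 1" using abs_square_le_1 by (auto simp: abs_le_iff)
  have c: "cos (arccos (- C / Q)) = - C / Q" using y by simp
  have s: "sin (arccos (- C / Q)) = S / Q" using sin_arccos[OF y] y2 S0 Q0 by simp
  have "cos (2 * sph_angle w0 w1 w2) * ((m \<bullet> m) * (n \<bullet> n)) = C^2 - S^2"
    unfolding angle cos_double c s QP[symmetric] using Q0 by (simp add: field_simps power_divide)
  moreover have "sin (2 * sph_angle w0 w1 w2) * ((m \<bullet> m) * (n \<bullet> n)) = -2 * C * S"
    unfolding angle sin_double c s QP[symmetric] using Q0 by (simp add: field_simps power2_eq_square)
  ultimately show ?thesis unfolding m_def[symmetric] n_def[symmetric]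
    by (intro reflection_matrix_mult_eq_rot[OF mw nw u0 m0 n0, symmetric]) (simp_all add: C_def S_def)
qed

text \<open>The vertices are the normalised intersection lines of the three planes; the orientation
  is automatically clockwise, as w0 \<bullet> (w1 \<times> w2) is a negative multiple of (p \<bullet> (q \<times> r))^2.\<close>
lemma cw_triangle_of_normals:
  fixes p q r :: "real^3"
  assumes nondeg: "p \<bullet> cross3 q r \<noteq> 0"
  defines "w0 \<equiv> sgn (cross3 p q)" and "w1 \<equiv> sgn (cross3 r p)" and "w2 \<equiv> sgn (cross3 q r)"
  shows "cw_sph_triangle w0 w1 w2"
    and "reflection_matrix p ** reflection_matrix q = rot w0 (2 * sph_angle w0 w1 w2)"
    and "reflection_matrix r ** reflection_matrix p = rot w1 (2 * sph_angle w1 w2 w0)"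
    and "reflection_matrix q ** reflection_matrix r = rot w2 (2 * sph_angle w2 w0 w1)"
proof -
  define d where "d = p \<bullet> cross3 q r"
  define k0 k1 k2 where "k0 = inverse (norm (cross3 p q))" and "k1 = inverse (norm (cross3 r p))"
    and "k2 = inverse (norm (cross3 q r))"
  have d: "d \<noteq> 0" using nondeg unfolding d_def .
  have cyc: "q \<bullet> cross3 r p = d" "r \<bullet> cross3 p q = d" "cross3 p q \<bullet> r = d"
    unfolding d_def using inner_cross_cyclic[of p q r] inner_cross_cyclic[of q r p]
    by (simp_all add: inner_commute)
  have "cross3 p q \<noteq> 0" "cross3 r p \<noteq> 0" "cross3 q r \<noteq> 0"
    using d cyc unfolding d_def by auto
  then have k: "k0 > 0" "k1 > 0" "k2 > 0" and unit: "norm w0 = 1" "norm w1 = 1" "norm w2 = 1"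
    unfolding k0_def k1_def k2_def w0_def w1_def w2_def by (simp_all add: norm_sgn)
  have w: "w0 = k0 *\<^sub>R cross3 p q" "w1 = k1 *\<^sub>R cross3 r p" "w2 = k2 *\<^sub>R cross3 q r"
    unfolding k0_def k1_def k2_def w0_def w1_def w2_def sgn_div_norm by simp_all
  have w01: "cross3 w0 w1 = (- d * k0 * k1) *\<^sub>R p"
    and w12: "cross3 w1 w2 = (- d * k1 * k2) *\<^sub>R r"
    and w20: "cross3 w2 w0 = (- d * k2 * k0) *\<^sub>R q"
    unfolding w by (simp_all add: cross_mult_left cross_mult_right cross_cross_left dot_cross_self cyc d_def)
  have refl: "reflection_matrix (cross3 w0 w1) = reflection_matrix p"
    "reflection_matrix (cross3 w1 w2) = reflection_matrix r"
    "reflection_matrix (cross3 w2 w0) = reflection_matrix q"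
    unfolding w01 w12 w20 by (rule reflection_matrix_scaleR, use d k in simp)+
  have "w0 \<bullet> cross3 w1 w2 = - (k0 * k1 * k2) * d^2"
    unfolding w12 w(1) by (simp add: cyc power2_eq_square algebra_simps)
  also have "\<dots> < 0" using k d by (intro mult_neg_pos) simp_all
  finally show T: "cw_sph_triangle w0 w1 w2"
    unfolding cw_sph_triangle_def using unit by simp
  then have "cw_sph_triangle w1 w2 w0" "cw_sph_triangle w2 w0 w1"
    unfolding cw_sph_triangle_def using inner_cross_cyclic[of w0 w1 w2] inner_cross_cyclic[of w1 w2 w0]
    by auto
  then show "reflection_matrix p ** reflection_matrix q = rot w0 (2 * sph_angle w0 w1 w2)"
    and "reflection_matrix r ** reflection_matrix p = rot w1 (2 * sph_angle w1 w2 w0)"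
    and "reflection_matrix q ** reflection_matrix r = rot w2 (2 * sph_angle w2 w0 w1)"
    using rot_vertex_eq_reflections T by (simp_all add: refl)
qed

lemma triangular_rep_reflections:
  fixes p q r :: "real^3"
  assumes "p \<bullet> cross3 q r \<noteq> 0"
  shows "triangular_rep (reflection_matrix p ** reflection_matrix q,
    reflection_matrix r ** reflection_matrix p, reflection_matrix q ** reflection_matrix r)"
proof -
  obtain w0 w1 w2 where T: "cw_sph_triangle w0 w1 w2"
    and a: "reflection_matrix p ** reflection_matrix q = rot w0 (2 * sph_angle w0 w1 w2)"
    and b: "reflection_matrix r ** reflection_matrix p = rot w1 (2 * sph_angle w1 w2 w0)"
    and c: "reflection_matrix q ** reflection_matrix r = rot w2 (2 * sph_angle w2 w0 w1)"
    using cw_triangle_of_normals[OF assms] by blast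
  have "p \<noteq> 0" "q \<noteq> 0" "r \<noteq> 0" using assms by auto
  then have "(reflection_matrix q ** reflection_matrix r) ** (reflection_matrix r ** reflection_matrix p)
      ** (reflection_matrix p ** reflection_matrix q) = mat 1"
    by (simp add: matrix_mul_assoc reflection_matrix_square)
      (simp add: matrix_mul_assoc[symmetric] reflection_matrix_square)
  moreover have "norm w0 = 1" "norm w1 = 1" "norm w2 = 1" using T unfolding cw_sph_triangle_def by auto
  ultimately show ?thesis
    unfolding triangular_rep_def Hom_P_def using T a b c rot_in_SO3 by auto
qed

lemma inner_cross_turned_normals:
  fixes a b :: "real^3"
  defines "p \<equiv> cross3 a b"
  shows "p \<bullet> cross3 (cos \<alpha> *\<^sub>R p + sin \<alpha> *\<^sub>R cross3 a p) (cos \<beta> *\<^sub>R p + sin \<beta> *\<^sub>R cross3 b p)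
    = sin \<alpha> * sin \<beta> * (p \<bullet> p)^2"
proof -
  have "cross3 a p = (a \<bullet> b) *\<^sub>R a - (a \<bullet> a) *\<^sub>R b" unfolding p_def by (rule cross_cross_right)
  moreover have "p \<bullet> p = (a \<bullet> a) * (b \<bullet> b) - (a \<bullet> b) * (b \<bullet> a)" unfolding p_def by (rule dot_cross)
  ultimately have "cross3 a p \<bullet> b = - (p \<bullet> p)"
    by (simp add: inner_diff_left inner_diff_right inner_commute)
  then have "p \<bullet> cross3 (cross3 a p) (cross3 b p) = (p \<bullet> p)^2"
    by (simp add: cross_cross_right dot_cross_self inner_diff_right power2_eq_square)
  then show ?thesis
    by (simp add: cross_add_left cross_add_right cross_mult_left cross_mult_right inner_add_right
        dot_cross_self)
qed

lemma Hom_P_iff: "(a, b, c) \<in> Hom_P \<longleftrightarrow> a \<in> SO3 \<and> b \<in> SO3 \<and> c = transpose (b ** a)"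
proof -
  have "c ** b ** a = mat 1 \<longleftrightarrow> c = transpose (b ** a)" if "a \<in> SO3" "b \<in> SO3"
  proof
    let ?t = "transpose (b ** a)"
    have ba: "?t ** (b ** a) = mat 1" "(b ** a) ** ?t = mat 1"
      using SO3_D[OF SO3_mult[OF that(2,1)]] by auto
    assume "c ** b ** a = mat 1"
    then have "c ** (b ** a) = mat 1" by (simp only: matrix_mul_assoc)
    then have "c ** ((b ** a) ** ?t) = ?t" by (metis matrix_mul_assoc matrix_mul_lid)
    then show "c = ?t" using ba(2) by simp
  next
    assume "c = transpose (b ** a)"
    then show "c ** b ** a = mat 1"
      using SO3_D[OF SO3_mult[OF that(2,1)]] by (simp add: matrix_mul_assoc)
  qed
  then show ?thesis unfolding Hom_P_def using SO3_transpose SO3_mult by blast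
qed

lemma sin_half_nonzero: "0 < \<phi> \<Longrightarrow> \<phi> \<le> pi \<Longrightarrow> sin (\<phi> / 2) \<noteq> 0"
  using sin_gt_zero[of "\<phi> / 2"] pi_gt_zero by fastforce

text \<open>The plane spanned by the axes of a = R(w0, \<phi>) and b = R(w1, \<psi>), together with its turns
  about w0 by -\<phi>/2 and about w1 by \<psi>/2, gives a = \<sigma>_p \<sigma>_q and b = \<sigma>_r \<sigma>_p.\<close>
lemma triangular_rep_if_noncommuting:
  assumes H: "(a, b, c) \<in> Hom_P" and nc: "a ** b \<noteq> b ** a"
  shows "triangular_rep (a, b, c)"
proof -
  have SO: "a \<in> SO3" "b \<in> SO3" using H by (simp_all add: Hom_P_iff)
  obtain w0 \<phi> where w0: "norm w0 = 1" "0 \<le> \<phi>" "\<phi> \<le> pi" and a: "a = rot w0 \<phi>"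
    using SO3_eq_rot_angle_0_pi[OF SO(1)] by blast
  obtain w1 \<psi> where w1: "norm w1 = 1" "0 \<le> \<psi>" "\<psi> \<le> pi" and b: "b = rot w1 \<psi>"
    using SO3_eq_rot_angle_0_pi[OF SO(2)] by blast
  have "\<phi> \<noteq> 0" "\<psi> \<noteq> 0" using nc unfolding a b by (auto simp: rot_zero)
  then have s: "sin (- \<phi> / 2) \<noteq> 0" "sin (\<psi> / 2) \<noteq> 0"
    using sin_half_nonzero[of \<phi>] sin_half_nonzero[of \<psi>] w0(2,3) w1(2,3) by simp_all
  define p where "p = cross3 w0 w1"
  have "p \<noteq> 0"
  proof
    assume "p = 0"
    then have "w1 = w0 \<or> w1 = - w0" using cross_eq_0_unit_vectors[OF w0(1) w1(1)] unfolding p_def by simp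
    then have "b = rot w0 \<psi> \<or> b = rot w0 (- \<psi>)" unfolding b by (auto simp: rot_minus_axis)
    then have "a ** b = b ** a" unfolding a using rot_commute[OF w0(1)] by (elim disjE) simp_all
    then show False using nc by simp
  qed
  have pw: "p \<bullet> w0 = 0" "p \<bullet> w1 = 0" unfolding p_def by (simp_all add: dot_cross_self)
  have unit: "w0 \<bullet> w0 = 1" "w1 \<bullet> w1 = 1" using w0(1) w1(1) by (simp_all add: norm_eq_1)
  define q where "q = cos (- \<phi> / 2) *\<^sub>R p + sin (- \<phi> / 2) *\<^sub>R cross3 w0 p"
  define r where "r = cos (\<psi> / 2) *\<^sub>R p + sin (\<psi> / 2) *\<^sub>R cross3 w1 p"
  have a': "a = reflection_matrix p ** reflection_matrix q"
    using reflection_matrix_turned_normal(2)[OF unit(1) pw(1) \<open>p \<noteq> 0\<close>, of "- \<phi> / 2"]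
    unfolding a q_def by simp
  have b': "b = reflection_matrix r ** reflection_matrix p"
    using reflection_matrix_turned_normal(1)[OF unit(2) pw(2) \<open>p \<noteq> 0\<close>, of "\<psi> / 2"]
    unfolding b r_def by simp
  have nondeg: "p \<bullet> cross3 q r \<noteq> 0"
    unfolding q_def r_def p_def inner_cross_turned_normals using s \<open>p \<noteq> 0\<close> p_def by simp
  have "c = reflection_matrix q ** reflection_matrix r"
    using triangular_rep_reflections[OF nondeg] H unfolding triangular_rep_def a' b'
    by (simp add: Hom_P_iff)
  then show ?thesis using triangular_rep_reflections[OF nondeg] a' b' by simp
qed

section \<open>Topology of the character variety\<close>

lemma topspace_quotient_topology: "topspace (quotient_topology X q) = q ` topspace X"
proof
  have "openin (quotient_topology X q) (topspace (quotient_topology X q))" by simp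
  then show "topspace (quotient_topology X q) \<subseteq> q ` topspace X"
    unfolding openin_quotient_topology by blast
  have "{x \<in> topspace X. q x \<in> q ` topspace X} = topspace X" by auto
  then have "openin (quotient_topology X q) (q ` topspace X)"
    unfolding openin_quotient_topology by simp
  then show "q ` topspace X \<subseteq> topspace (quotient_topology X q)" by (rule openin_subset)
qed

lemma openin_quotient_topology_image:
  assumes T: "openin X T"
    and saturated: "\<And>x t. x \<in> topspace X \<Longrightarrow> t \<in> T \<Longrightarrow> q x = q t \<Longrightarrow> x \<in> T"
  shows "openin (quotient_topology X q) (q ` T)"
proof -
  have "T \<subseteq> topspace X" using T by (rule openin_subset)
  then have "{x \<in> topspace X. q x \<in> q ` T} = T" using saturated by auto
  then show ?thesis unfolding openin_quotient_topology using T \<open>T \<subseteq> topspace X\<close> by auto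
qed

lemma closure_of_eq_topspace_if_paths:
  assumes "\<And>x. x \<in> topspace X \<Longrightarrow> \<exists>\<gamma>. pathin X \<gamma> \<and> \<gamma> 0 = x \<and> (\<forall>t\<in>{0<..1}. \<gamma> t \<in> U)"
  shows "X closure_of U = topspace X"
proof (rule antisym[OF closure_of_subset_topspace], rule subsetI)
  fix x assume x: "x \<in> topspace X"
  then obtain \<gamma> where \<gamma>: "pathin X \<gamma>" "\<gamma> 0 = x" "\<forall>t\<in>{0<..1}. \<gamma> t \<in> U" using assms by blast
  show "x \<in> X closure_of U" unfolding in_closure_of
  proof (intro conjI x allI impI)
    fix V assume V: "x \<in> V \<and> openin X V"
    then have "openin (top_of_set {0..1}) {t \<in> {0..1}. \<gamma> t \<in> V}"
      using \<gamma>(1) unfolding pathin_def continuous_map by auto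
    moreover have "0 \<in> {t \<in> {0..1::real}. \<gamma> t \<in> V}" using \<gamma>(2) V by simp
    ultimately obtain e where e: "e > 0" "\<forall>t\<in>{0..1}. dist t 0 < e \<longrightarrow> \<gamma> t \<in> V"
      unfolding openin_euclidean_subtopology_iff by blast
    have "min (e/2) 1 \<in> {0<..1}" "dist (min (e/2) 1) 0 < e" using e(1) by auto
    then show "\<exists>y. y \<in> U \<and> y \<in> V" using e(2) \<gamma>(3) by fastforce
  qed
qed

lemma topspace_Hom_top: "topspace Hom_top = Hom_P"
  unfolding Hom_top_def by simp

lemma topspace_rep_top: "topspace rep_top = character ` Hom_P"
  unfolding rep_top_def topspace_quotient_topology topspace_Hom_top ..

lemma continuous_map_character: "continuous_map Hom_top rep_top character"
  unfolding continuous_map rep_top_def topspace_quotient_topology openin_quotient_topology by auto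

lemma matrix_inv_SO3: "g \<in> SO3 \<Longrightarrow> g ** matrix_inv g = mat 1 \<and> matrix_inv g ** g = mat 1"
  unfolding matrix_inv_def by (rule someI[of _ "transpose g"]) (simp add: SO3_D)

lemma in_character: "h \<in> character h"
proof -
  have "matrix_inv (mat 1 :: mat3) = mat 1" using matrix_inv_SO3[OF mat_1_in_SO3] by simp
  then have "conj_rep (mat 1) h = h" unfolding conj_rep_def by (cases h) simp
  then show ?thesis unfolding character_def using mat_1_in_SO3 by force
qed

lemma continuous_on_matrix_mult [continuous_intros]:
  fixes A :: "'a::topological_space \<Rightarrow> real^'n^'m" and B :: "'a \<Rightarrow> real^'p^'n"
  assumes "continuous_on S A" "continuous_on S B"
  shows "continuous_on S (\<lambda>x. A x ** B x)"
  unfolding matrix_matrix_mult_def by (intro continuous_intros assms)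

lemma continuous_on_transpose [continuous_intros]:
  fixes A :: "'a::topological_space \<Rightarrow> real^'n^'m"
  shows "continuous_on S A \<Longrightarrow> continuous_on S (\<lambda>x. transpose (A x))"
  unfolding transpose_def by (intro continuous_intros)

definition noncommuting_reps :: "(mat3 \<times> mat3 \<times> mat3) set" where
  "noncommuting_reps = {(a, b, c) \<in> Hom_P. a ** b \<noteq> b ** a}"

lemma openin_noncommuting_reps: "openin Hom_top noncommuting_reps"
proof -
  have "open {h :: mat3 \<times> mat3 \<times> mat3. fst h ** fst (snd h) \<noteq> fst (snd h) ** fst h}"
    by (intro open_Collect_neq continuous_intros)
  moreover have "noncommuting_reps = {h. fst h ** fst (snd h) \<noteq> fst (snd h) ** fst h} \<inter> Hom_P"
    unfolding noncommuting_reps_def by auto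
  ultimately show ?thesis unfolding Hom_top_def openin_subtopology by auto
qed

lemma noncommuting_reps_conj_invariant:
  assumes x: "x \<in> Hom_P" and t: "t \<in> noncommuting_reps" and xt: "character x = character t"
  shows "x \<in> noncommuting_reps"
proof -
  obtain a b c where t_eq: "t = (a, b, c)" by (cases t)
  have ab: "a ** b \<noteq> b ** a" using t unfolding noncommuting_reps_def t_eq by simp
  have "x \<in> character t" using in_character[of x] xt by simp
  then obtain g where g: "g \<in> SO3" and x_eq: "x = conj_rep g t" unfolding character_def by blast
  define gi where "gi = matrix_inv g"
  have "g ** gi = mat 1" "gi ** g = mat 1" using matrix_inv_SO3[OF g] gi_def by auto
  then have cancel: "Z ** gi ** g = Z" "Z ** g ** gi = Z" for Z :: mat3
    by (metis matrix_mul_assoc matrix_mul_rid)+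
  have "gi ** ((g ** a ** gi) ** (g ** b ** gi)) ** g = a ** b"
    "gi ** ((g ** b ** gi) ** (g ** a ** gi)) ** g = b ** a"
    using \<open>gi ** g = mat 1\<close> by (simp_all add: matrix_mul_assoc cancel)
  then have "(g ** a ** gi) ** (g ** b ** gi) \<noteq> (g ** b ** gi) ** (g ** a ** gi)" using ab by metis
  then show ?thesis
    using x unfolding noncommuting_reps_def x_eq t_eq conj_rep_def gi_def by simp
qed

section \<open>Deforming a representation into a noncommuting one\<close>

lemma exists_direction_off_axis:
  fixes w v :: "real^3" assumes "w \<noteq> 0"
  obtains u where "\<And>t. t > 0 \<Longrightarrow> cross3 w (v + t *\<^sub>R u) \<noteq> 0"
proof (cases "cross3 w v = 0")
  case True
  obtain k where "cross3 w (axis k 1) \<noteq> 0" using cross_basis_nonzero[OF assms] by blast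
  with True show thesis by (intro that[of "axis k 1"]) (simp add: cross_add_right cross_mult_right)
next
  case False
  have "cross3 w (v + t *\<^sub>R cross3 w v) \<bullet> cross3 w v = cross3 w v \<bullet> cross3 w v" for t
    by (simp add: cross_add_right cross_mult_right inner_add_left dot_cross_self)
  with False show thesis by (intro that[of "cross3 w v"]) (metis inner_zero_left inner_eq_zero_iff)
qed

lemma unit_path_off_axis:
  fixes w v :: "real^3" assumes "w \<noteq> 0" "norm v = 1"
  obtains V :: "real \<Rightarrow> real^3" where "continuous_on {0..1} V" "V 0 = v"
    "\<forall>t\<in>{0..1}. norm (V t) = 1" "\<forall>t\<in>{0<..1}. cross3 w (V t) \<noteq> 0"
proof -
  obtain u where u: "\<And>t. t > 0 \<Longrightarrow> cross3 w (v + t *\<^sub>R u) \<noteq> 0"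
    using exists_direction_off_axis[OF assms(1), of v] by blast
  have nz: "v + t *\<^sub>R u \<noteq> 0" if "t \<in> {0..1}" for t
    using that u[of t] assms(2) by (cases "t = 0") auto
  define V where "V t = sgn (v + t *\<^sub>R u)" for t
  show thesis
  proof (rule that[of V])
    show "continuous_on {0..1} V" unfolding V_def using nz by (intro continuous_intros) auto
    show "V 0 = v" unfolding V_def using assms(2) by (simp add: sgn_div_norm)
    show "\<forall>t\<in>{0..1}. norm (V t) = 1" unfolding V_def using nz by (simp add: norm_sgn)
    show "\<forall>t\<in>{0<..1}. cross3 w (V t) \<noteq> 0"
      unfolding V_def using u nz by (simp add: sgn_div_norm cross_mult_right)
  qed
qed

lemma interpolated_angle_bounds:
  assumes "0 \<le> \<phi>" "\<phi> \<le> pi" "0 < t" "t \<le> 1"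
  shows "0 < (1 - t) * \<phi> + t * (pi / 2)" "(1 - t) * \<phi> + t * (pi / 2) < pi"
proof -
  have "(1 - t) * \<phi> \<le> (1 - t) * pi" "0 \<le> (1 - t) * \<phi>"
    using assms by (simp_all add: mult_left_mono)
  moreover have "0 < t * (pi / 2)" "(1 - t) * pi = pi - 2 * (t * (pi / 2))"
    using assms by (simp_all add: algebra_simps)
  ultimately show "0 < (1 - t) * \<phi> + t * (pi / 2)" "(1 - t) * \<phi> + t * (pi / 2) < pi"
    by linarith+
qed

text \<open>Move both rotation angles towards pi/2 and tilt the second axis off the first.\<close>
lemma SO3_pair_path_to_noncommuting:
  assumes "a \<in> SO3" "b \<in> SO3"
  obtains A B :: "real \<Rightarrow> mat3" where "continuous_on {0..1} A" "continuous_on {0..1} B"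
    "A 0 = a" "B 0 = b" "\<forall>t\<in>{0..1}. A t \<in> SO3 \<and> B t \<in> SO3"
    "\<forall>t\<in>{0<..1}. A t ** B t \<noteq> B t ** A t"
proof -
  obtain w \<phi> where w: "norm w = 1" "0 \<le> \<phi>" "\<phi> \<le> pi" and a: "a = rot w \<phi>"
    using SO3_eq_rot_angle_0_pi[OF assms(1)] by blast
  obtain v \<psi> where v: "norm v = 1" "0 \<le> \<psi>" "\<psi> \<le> pi" and b: "b = rot v \<psi>"
    using SO3_eq_rot_angle_0_pi[OF assms(2)] by blast
  have "w \<noteq> 0" using w(1) by (metis norm_zero zero_neq_one)
  obtain V :: "real \<Rightarrow> real^3"
    where V: "continuous_on {0..1} V" "V 0 = v" "\<forall>t\<in>{0..1}. norm (V t) = 1"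
      "\<forall>t\<in>{0<..1}. cross3 w (V t) \<noteq> 0"
    using unit_path_off_axis[OF \<open>w \<noteq> 0\<close> v(1)] by blast
  define f where "f t = (1 - t) * \<phi> + t * (pi / 2)" for t
  define g where "g t = (1 - t) * \<psi> + t * (pi / 2)" for t
  show thesis
  proof (rule that[of "\<lambda>t. rot w (f t)" "\<lambda>t. rot (V t) (g t)"])
    show "continuous_on {0..1} (\<lambda>t. rot w (f t))" "continuous_on {0..1} (\<lambda>t. rot (V t) (g t))"
      unfolding f_def g_def by (intro continuous_on_rot continuous_intros V(1))+
    show "rot w (f 0) = a" "rot (V 0) (g 0) = b" unfolding f_def g_def a b V(2) by simp_all
    show "\<forall>t\<in>{0..1}. rot w (f t) \<in> SO3 \<and> rot (V t) (g t) \<in> SO3"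
      using rot_in_SO3 w(1) V(3) by blast
    show "\<forall>t\<in>{0<..1}. rot w (f t) ** rot (V t) (g t) \<noteq> rot (V t) (g t) ** rot w (f t)"
    proof
      fix t :: real assume t: "t \<in> {0<..1}"
      show "rot w (f t) ** rot (V t) (g t) \<noteq> rot (V t) (g t) ** rot w (f t)"
      proof (rule rot_noncommute[OF w(1)])
        have "0 < f t" "f t < pi" "0 < g t" "g t < pi"
          using interpolated_angle_bounds w(2,3) v(2,3) t unfolding f_def g_def by auto
        then show "cos (f t) \<noteq> 1" "sin (g t) \<noteq> 0"
          using cos_monotone_0_pi[of 0 "f t"] sin_gt_zero[of "g t"] by auto
      qed (use t V(3,4) in auto)
    qed
  qed
qed

lemma Hom_path_to_noncommuting:
  assumes "h \<in> Hom_P"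
  obtains \<delta> :: "real \<Rightarrow> mat3 \<times> mat3 \<times> mat3"
  where "pathin Hom_top \<delta>" "\<delta> 0 = h" "\<forall>t\<in>{0<..1}. \<delta> t \<in> noncommuting_reps"
proof -
  obtain a b c where h: "h = (a, b, c)" by (cases h)
  then have SO: "a \<in> SO3" "b \<in> SO3" and c: "c = transpose (b ** a)"
    using assms by (simp_all add: Hom_P_iff)
  obtain A B :: "real \<Rightarrow> mat3"
    where AB: "continuous_on {0..1} A" "continuous_on {0..1} B" "A 0 = a" "B 0 = b"
      "\<forall>t\<in>{0..1}. A t \<in> SO3 \<and> B t \<in> SO3" "\<forall>t\<in>{0<..1}. A t ** B t \<noteq> B t ** A t"
    using SO3_pair_path_to_noncommuting[OF SO] by blast
  define \<delta> where "\<delta> t = (A t, B t, transpose (B t ** A t))" for t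
  have Hom: "\<forall>t\<in>{0..1}. \<delta> t \<in> Hom_P" using AB(5) unfolding \<delta>_def by (simp add: Hom_P_iff)
  have "continuous_on {0..1} \<delta>" unfolding \<delta>_def by (intro continuous_intros AB(1,2))
  with Hom have "pathin Hom_top \<delta>"
    unfolding pathin_def Hom_top_def by (auto simp: continuous_map_in_subtopology)
  moreover have "\<delta> 0 = h" unfolding \<delta>_def h c AB(3,4) ..
  moreover have "\<forall>t\<in>{0<..1}. \<delta> t \<in> noncommuting_reps"
    using Hom AB(6) unfolding noncommuting_reps_def \<delta>_def by auto
  ultimately show thesis using that by blast
qed

theorem mainTheorem4:
  shows "(\<exists>U. openin rep_top U \<and> rep_top closure_of U = topspace rep_top \<and>
              (\<forall>c\<in>U. triangular_char c))
       \<and> (\<forall>c\<in>topspace rep_top. \<exists>\<gamma>. pathin rep_top \<gamma> \<and> \<gamma> 0 = c \<and>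
              (\<forall>t\<in>{0<..1}. triangular_char (\<gamma> t)))"
proof -
  define U where "U = character ` noncommuting_reps"
  have triangular: "\<forall>c\<in>U. triangular_char c"
    unfolding U_def triangular_char_def noncommuting_reps_def
    using triangular_rep_if_noncommuting by blast
  have "openin rep_top U"
    unfolding U_def rep_top_def using noncommuting_reps_conj_invariant
    by (intro openin_quotient_topology_image openin_noncommuting_reps) (auto simp: topspace_Hom_top)
  have paths: "\<exists>\<gamma>. pathin rep_top \<gamma> \<and> \<gamma> 0 = c \<and> (\<forall>t\<in>{0<..1}. \<gamma> t \<in> U)"
    if c: "c \<in> topspace rep_top" for c
  proof -
    obtain h where h: "h \<in> Hom_P" "c = character h" using c unfolding topspace_rep_top by blast
    obtain \<delta> :: "real \<Rightarrow> mat3 \<times> mat3 \<times> mat3" where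
      \<delta>: "pathin Hom_top \<delta>" "\<delta> 0 = h" "\<forall>t\<in>{0<..1}. \<delta> t \<in> noncommuting_reps"
      using Hom_path_to_noncommuting[OF h(1)] by blast
    have "pathin rep_top (character \<circ> \<delta>)" using \<delta>(1) continuous_map_character by (rule pathin_compose)
    then show ?thesis using \<delta>(2,3) h(2) unfolding U_def by (intro exI[of _ "character \<circ> \<delta>"]) auto
  qed
  then have "rep_top closure_of U = topspace rep_top" by (rule closure_of_eq_topspace_if_paths)
  then show ?thesis using \<open>openin rep_top U\<close> triangular paths by fast
qed

end
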